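(* Let $k\ge1$, $p\in[1,\infty)$, let $A_0,\dots,A_{k-1}\in\mathbb{C}$ be constants and $A_k$ an entire function, and consider $$f^{(k)}+A_{k-1}f^{(k-1)}+\cdots+A_{1}f'+A_{0}f=A_{k}.$$ If some solution $f$ of this equation belongs to $F^{p,k}$, then $A_k\in F^p$.
   Context: $dm$ is Lebesgue area measure. $F^p$ is the space of entire $f$ with $\|f\|_p^p=\int_{\mathbb{C}}|f(z)e^{-\frac12|z|^2}|^p\,dm(z)<\infty$. For a positive integer $m$, $F^{p,m}$ is the space of entire $f$ with $\sum_{\alpha=0}^{m}\|f^{(\alpha)}\|_p<\infty$. *)

theory Defs
  imports "HOL-Complex_Analysis.Complex_Analysis"
begin

text \<open>The p-th power of the Fock norm: integral over C (Lebesgue area measure lborel)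
  of |f(z) e^{-|z|^2/2}|^p, as an extended nonnegative real.\<close>
definition fock_integral :: "real \<Rightarrow> (complex \<Rightarrow> complex) \<Rightarrow> ennreal" where
  "fock_integral p f = (\<integral>\<^sup>+ z. ennreal ((cmod (f z) * exp (- (cmod z)\<^sup>2 / 2)) powr p) \<partial>lborel)"

definition in_Fock :: "real \<Rightarrow> (complex \<Rightarrow> complex) \<Rightarrow> bool" where
  "in_Fock p f \<longleftrightarrow> f holomorphic_on UNIV \<and> fock_integral p f < \<infinity>"

text \<open>F^{p,m}: entire f with sum_{alpha=0}^m ||f^(alpha)||_p finite, i.e. each derivative
  up to order m has finite Fock norm.\<close>
definition in_Fock_deriv :: "real \<Rightarrow> nat \<Rightarrow> (complex \<Rightarrow> complex) \<Rightarrow> bool" where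
  "in_Fock_deriv p m f \<longleftrightarrow> f holomorphic_on UNIV \<and>
     (\<forall>\<alpha>\<le>m. fock_integral p ((deriv ^^ \<alpha>) f) < \<infinity>)"

end

theory Submission
  imports Defs
begin

text \<open>Pointwise, the equation expresses \<open>A\<^sub>k\<close> as a linear combination of \<open>f, f', \<dots>, f\<^sup>(\<^sup>k\<^sup>)\<close>
  with constant coefficients, so \<open>|A\<^sub>k|\<close> is dominated by a constant times
  \<open>|f| + \<dots> + |f\<^sup>(\<^sup>k\<^sup>)|\<close>. As \<open>(y\<^sub>1 + \<dots> + y\<^sub>n)\<^sup>p \<le> n\<^sup>p (y\<^sub>1\<^sup>p + \<dots> + y\<^sub>n\<^sup>p)\<close>, the Fock integral
  of \<open>A\<^sub>k\<close> is then bounded by a constant times the sum of the Fock integrals of the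
  derivatives, each finite for \<open>f \<in> F\<^sup>p\<^sup>,\<^sup>k\<close>.\<close>

lemma powr_sum_le_card_powr_sum:
  fixes y :: "'a \<Rightarrow> real"
  assumes "finite J" and "\<And>j. j \<in> J \<Longrightarrow> 0 \<le> y j" and "0 \<le> p"
  shows "(\<Sum>j\<in>J. y j) powr p \<le> real (card J) powr p * (\<Sum>j\<in>J. y j powr p)"
proof (cases "J = {}")
  case False
  define m where "m = Max (y ` J)"
  have "m \<in> y ` J" unfolding m_def using assms(1) False by (intro Max_in finite_imageI) auto
  then obtain i where i: "i \<in> J" "m = y i" by auto
  have "(\<Sum>j\<in>J. y j) \<le> (\<Sum>j\<in>J. m)"
    by (rule sum_mono) (simp add: m_def assms(1))
  also have "\<dots> = real (card J) * m" by simp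
  finally have "(\<Sum>j\<in>J. y j) powr p \<le> (real (card J) * m) powr p"
    by (intro powr_mono2) (auto intro: sum_nonneg simp: assms)
  also have "\<dots> = real (card J) powr p * m powr p"
    using i assms(2) by (simp add: powr_mult)
  also have "\<dots> \<le> real (card J) powr p * (\<Sum>j\<in>J. y j powr p)"
    using i member_le_sum[of i J "\<lambda>j. y j powr p"] assms(1) by (intro mult_left_mono) auto
  finally show ?thesis .
qed simp

lemma fock_integral_finite_if_dominated:
  fixes g :: "complex \<Rightarrow> complex" and h :: "'a \<Rightarrow> complex \<Rightarrow> complex"
  assumes "finite J" and "0 \<le> p" and "0 \<le> c"
    and meas: "\<And>j. j \<in> J \<Longrightarrow> h j \<in> borel_measurable borel"
    and fin: "\<And>j. j \<in> J \<Longrightarrow> fock_integral p (h j) < \<infinity>"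
    and dom: "\<And>z. cmod (g z) \<le> c * (\<Sum>j\<in>J. cmod (h j z))"
  shows "fock_integral p g < \<infinity>"
proof -
  define w where "w z = exp (- (cmod z)\<^sup>2 / 2)" for z :: complex
  define y where "y j z = (cmod (h j z) * w z) powr p" for j z
  define C where "C = (c * real (card J)) powr p"
  have y_meas: "(\<lambda>z. ennreal (y j z)) \<in> borel_measurable lborel" if "j \<in> J" for j
    unfolding y_def w_def using meas[OF that] by measurable
  have pointwise: "(cmod (g z) * w z) powr p \<le> C * (\<Sum>j\<in>J. y j z)" for z
  proof -
    have "(cmod (g z) * w z) powr p \<le> (c * (\<Sum>j\<in>J. cmod (h j z) * w z)) powr p"
      using mult_right_mono[OF dom[of z], of "w z"] assms(2)
      by (intro powr_mono2) (auto simp: w_def sum_distrib_right mult_ac)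
    also have "\<dots> = c powr p * (\<Sum>j\<in>J. cmod (h j z) * w z) powr p"
      using assms(3) by (simp add: powr_mult sum_nonneg w_def)
    also have "\<dots> \<le> c powr p * (real (card J) powr p * (\<Sum>j\<in>J. y j z))"
      unfolding y_def
      by (intro mult_left_mono powr_sum_le_card_powr_sum) (auto simp: assms w_def)
    finally show ?thesis
      using assms(3) by (simp add: C_def powr_mult mult_ac)
  qed
  have "fock_integral p g \<le> (\<integral>\<^sup>+ z. ennreal C * (\<Sum>j\<in>J. ennreal (y j z)) \<partial>lborel)"
    unfolding fock_integral_def w_def[symmetric]
  proof (rule nn_integral_mono)
    fix z
    have "ennreal ((cmod (g z) * w z) powr p) \<le> ennreal (C * (\<Sum>j\<in>J. y j z))"
      using pointwise by (rule ennreal_leI)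
    also have "\<dots> = ennreal C * (\<Sum>j\<in>J. ennreal (y j z))"
      by (simp add: C_def y_def ennreal_mult sum_nonneg)
    finally show "ennreal ((cmod (g z) * w z) powr p) \<le> ennreal C * (\<Sum>j\<in>J. ennreal (y j z))" .
  qed
  also have "\<dots> = ennreal C * (\<Sum>j\<in>J. \<integral>\<^sup>+ z. ennreal (y j z) \<partial>lborel)"
  proof -
    have "(\<lambda>z. \<Sum>j\<in>J. ennreal (y j z)) \<in> borel_measurable lborel"
      using y_meas by (rule borel_measurable_sum)
    thus ?thesis
      by (simp only: nn_integral_cmult nn_integral_sum[OF y_meas])
  qed
  also have "\<dots> < \<infinity>"
  proof -
    have "\<forall>j\<in>J. (\<integral>\<^sup>+ z. ennreal (y j z) \<partial>lborel) < top"
      using fin unfolding fock_integral_def y_def w_def infinity_ennreal_def by blast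
    hence "(\<Sum>j\<in>J. \<integral>\<^sup>+ z. ennreal (y j z) \<partial>lborel) < top"
      using ennreal_sum_less_top[OF assms(1)] by blast
    thus ?thesis
      unfolding infinity_ennreal_def by (simp add: ennreal_mult_less_top)
  qed
  finally show ?thesis .
qed

lemma norm_linear_combination_le:
  fixes g :: "nat \<Rightarrow> 'a :: real_normed_div_algebra"
  shows "norm (g k + (\<Sum>j<k. A j * g j)) \<le> (1 + (\<Sum>j<k. norm (A j))) * (\<Sum>j\<le>k. norm (g j))"
proof -
  define M where "M = 1 + (\<Sum>j<k. norm (A j))"
  have M_ge: "1 \<le> M" "\<And>j. j < k \<Longrightarrow> norm (A j) \<le> M"
    using member_le_sum[of _ "{..<k}" "\<lambda>j. norm (A j)"]
    by (auto simp: M_def sum_nonneg intro: add_increasing)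
  have "norm (g k + (\<Sum>j<k. A j * g j)) \<le> norm (g k) + (\<Sum>j<k. norm (A j) * norm (g j))"
    by (rule order_trans[OF norm_triangle_ineq add_left_mono])
       (simp add: norm_mult order_trans[OF norm_sum])
  also have "\<dots> \<le> M * norm (g k) + (\<Sum>j<k. M * norm (g j))"
    using M_ge by (intro add_mono sum_mono mult_right_mono) (auto simp: mult_le_cancel_right1)
  also have "\<dots> = M * (\<Sum>j\<le>k. norm (g j))"
    by (simp add: lessThan_Suc_atMost[symmetric] sum_distrib_left algebra_simps)
  finally show ?thesis unfolding M_def .
qed

theorem theorem1p4:
  fixes k :: nat and p :: real and A :: "nat \<Rightarrow> complex"
    and Ak f :: "complex \<Rightarrow> complex"
  assumes "k \<ge> 1" and "1 \<le> p"
    and "Ak holomorphic_on UNIV"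
    and "f holomorphic_on UNIV"
    and "\<And>z. (deriv ^^ k) f z + (\<Sum>j<k. A j * (deriv ^^ j) f z) = Ak z"
    and "in_Fock_deriv p k f"
  shows "in_Fock p Ak"
proof -
  have meas: "(deriv ^^ j) f \<in> borel_measurable borel" if "j \<in> {..k}" for j
    using holomorphic_higher_deriv[OF assms(4)]
    by (intro borel_measurable_continuous_onI holomorphic_on_imp_continuous_on) auto
  have fin: "fock_integral p ((deriv ^^ j) f) < \<infinity>" if "j \<in> {..k}" for j
    using assms(6) that unfolding in_Fock_deriv_def by auto
  have dom: "cmod (Ak z) \<le> (1 + (\<Sum>j<k. cmod (A j))) * (\<Sum>j\<in>{..k}. cmod ((deriv ^^ j) f z))"
    for z using norm_linear_combination_le[of "\<lambda>j. (deriv ^^ j) f z" k A] by (simp only: assms(5))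
  have "fock_integral p Ak < \<infinity>"
    by (rule fock_integral_finite_if_dominated[OF _ _ _ meas fin dom])
       (use assms(2) in \<open>auto simp: sum_nonneg\<close>)
  thus ?thesis unfolding in_Fock_def using assms(3) by simp
qed

end
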